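(* For every integer $m\ge4$, \[ \sum_{n=1}^{\infty}\frac{h_n^{(3)}}{n^{m}}=\sum_{n=1}^{\infty}h_n^{(2)}\zeta(m,n)=\tfrac12\zeta_H(m-2)+\tfrac32\zeta_H(m-1)+\zeta_H(m)-\tfrac54\zeta(m-1)-\tfrac34\zeta(m-2). \]
   Context: Hyperharmonic numbers: $h_n^{(0)}=1/n$ for $n\ge1$, and for $r\ge1$, $h_n^{(r)}=\sum_{j=1}^{n}h_j^{(r-1)}$. $H_n=\sum_{j=1}^n 1/j$. $\zeta$ is the Riemann zeta function, $\zeta(s,a)=\sum_{j=0}^\infty (j+a)^{-s}$ the Hurwitz zeta function, and $\zeta_H(s)=\sum_{n=1}^{\infty}H_n/n^{s}$ for integers $s\ge2$. *)

theory Defs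
  imports "HOL-Analysis.Analysis"
begin

text \<open>Hyperharmonic numbers h_n^(r): h_n^(0) = 1/n (n >= 1), h_n^(r) = sum_{j=1}^n h_j^(r-1).
  Only values with n >= 1 are used; for n = 0 we get h_0^(0) = 0 (inverse 0 = 0).\<close>
fun hyperharm :: "nat \<Rightarrow> nat \<Rightarrow> real" where
  "hyperharm 0 n = inverse (real n)"
| "hyperharm (Suc r) n = (\<Sum>j=1..n. hyperharm r j)"

definition zeta_int :: "nat \<Rightarrow> real" where
  "zeta_int s = (\<Sum>n. 1 / real (n + 1) ^ s)"

definition hurwitz_zeta_int :: "nat \<Rightarrow> real \<Rightarrow> real" where
  "hurwitz_zeta_int s a = (\<Sum>j. 1 / (real j + a) ^ s)"

definition zetaH :: "nat \<Rightarrow> real" where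
  "zetaH s = (\<Sum>n. harm (n + 1) / real (n + 1) ^ s)"

end

theory Submission
  imports Defs
begin

(* Proof idea.
   (1) Closed forms: h_n^(1) = H_n, h_n^(2) = (n+1) H_n - n and
       h_n^(3) = (n+1)(n+2)/2 H_n - 3/4 n^2 - 5/4 n, each by induction on n
       from the recurrence h_(n+1)^(r+1) = h_n^(r+1) + h_(n+1)^(r).
   (2) Dividing the closed form of h_n^(3) by n^m splits the first series
       termwise into 1/2 H_n/n^(m-2) + 3/2 H_n/n^(m-1) + H_n/n^m
       - 5/4 1/n^(m-1) - 3/4 1/n^(m-2); all five series converge for m >= 4
       (zeta_H(s) converges for s >= 2 because H_n <= 2 sqrt n).
   (3) For every r the identity sum h_n^(r+1)/n^m = sum h_n^(r) zeta(m,n)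
       holds: write h_k^(r+1) = sum_(n<=k) h_n^(r), so the left side is a
       double sum of nonnegative terms over n <= k, and summing over k >= n
       first gives h_n^(r) zeta(m,n).  This is Tonelli for unconditional
       sums (has_sum over a Sigma set). *)

lemma hyperharm_Suc_Suc:
  "hyperharm (Suc r) (Suc n) = hyperharm (Suc r) n + hyperharm r (Suc n)"
  by simp

lemma hyperharm_nonneg: "hyperharm r n \<ge> 0"
  by (induction r arbitrary: n) (auto intro: sum_nonneg)

lemma hyperharm_1: "hyperharm 1 n = harm n"
  by (simp add: harm_def)

lemma hyperharm_2: "hyperharm 2 n = (real n + 1) * harm n - real n"
proof (induction n)
  case 0
  then show ?case by (simp add: harm_def numeral_2_eq_2)
next
  case (Suc n)
  have "hyperharm 2 (Suc n) = hyperharm 2 n + hyperharm 1 (Suc n)"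
    unfolding numeral_2_eq_2 One_nat_def by (rule hyperharm_Suc_Suc)
  also have "\<dots> = (real n + 1) * harm n - real n + (harm n + inverse (real (Suc n)))"
    unfolding hyperharm_1 Suc.IH harm_Suc ..
  also have "\<dots> = (real n + 1) * harm n - real n + harm n + 1 / (real n + 1)"
    by (simp add: inverse_eq_divide)
  also have "\<dots> = (real (Suc n) + 1) * harm (Suc n) - real (Suc n)"
    by (simp add: harm_Suc field_simps)
  finally show ?case .
qed

lemma hyperharm_3:
  "hyperharm 3 n = (real n + 1) * (real n + 2) / 2 * harm n - 3/4 * real n ^ 2 - 5/4 * real n"
proof (induction n)
  case 0
  then show ?case by (simp add: harm_def numeral_3_eq_3)
next
  case (Suc n)
  have "hyperharm 3 (Suc n) = hyperharm 3 n + hyperharm 2 (Suc n)"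
    unfolding numeral_3_eq_3 numeral_2_eq_2 by (rule hyperharm_Suc_Suc)
  also have "\<dots> = (real n + 1) * (real n + 2) / 2 * harm n - 3/4 * real n ^ 2 - 5/4 * real n
       + ((real n + 2) * (harm n + 1 / (real n + 1)) - (real n + 1))"
    by (simp add: hyperharm_2 Suc.IH harm_Suc inverse_eq_divide add.commute)
  also have "\<dots> = (real (Suc n) + 1) * (real (Suc n) + 2) / 2 * harm (Suc n)
                   - 3/4 * real (Suc n) ^ 2 - 5/4 * real (Suc n)"
    by (simp add: harm_Suc field_simps power2_eq_square)
  finally show ?case .
qed

(* A crude growth bound for harmonic numbers, enough for zeta_H(2) to converge.
   Induction step: 1/(n+1) <= 1/sqrt(n+1) <= 2 (sqrt(n+1) - sqrt n). *)
lemma harm_le_two_sqrt: "harm n \<le> 2 * sqrt (real n)"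
proof (induction n)
  case 0
  then show ?case by (simp add: harm_def)
next
  case (Suc n)
  define a where "a = sqrt (real n)"
  define b where "b = sqrt (real n + 1)"
  have a0: "a \<ge> 0" and b1: "b \<ge> 1" and ab: "b\<^sup>2 = a\<^sup>2 + 1"
    by (simp_all add: a_def b_def)
  have "b \<le> b\<^sup>2" using b1 by (simp add: power2_eq_square)
  then have "1 / (real n + 1) \<le> 1 / b"
    using b1 by (simp add: b_def frac_le)
  also have "1 / b \<le> 2 * (b - a)"
  proof -
    have "a \<le> b" using ab a0 b1 by (smt (verit) power_mono)
    have "(b - a) * (b + a) = 1" using ab by (simp add: algebra_simps power2_eq_square)
    then have "1 \<le> (b - a) * (2 * b)" using \<open>a \<le> b\<close> a0 by (smt (verit) mult_left_mono)
    then show ?thesis using b1 by (simp add: field_simps)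
  qed
  finally have "harm (Suc n) \<le> 2 * a + 2 * (b - a)"
    using Suc by (simp add: harm_Suc a_def inverse_eq_divide add.commute)
  then show ?case by (simp add: b_def add.commute)
qed

lemma zeta_int_sums: "s \<ge> 2 \<Longrightarrow> (\<lambda>n. 1 / real (n + 1) ^ s) sums zeta_int s"
proof -
  assume "s \<ge> 2"
  then have "summable (\<lambda>n. 1 / real n ^ s)"
    using inverse_power_summable[of s, where 'a=real] by (simp add: inverse_eq_divide)
  then have "summable (\<lambda>n. 1 / real (Suc n) ^ s)"
    by (subst summable_Suc_iff)
  then show ?thesis unfolding zeta_int_def by (simp add: summable_sums)
qed

lemma zetaH_sums: "s \<ge> 2 \<Longrightarrow> (\<lambda>n. harm (n + 1) / real (n + 1) ^ s) sums zetaH s"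
proof -
  assume s2: "s \<ge> 2"
  have "summable (\<lambda>n. harm (n + 1) / real (n + 1) ^ s)"
  proof (rule summable_comparison_test[where g="\<lambda>n. 2 * real (Suc n) powr (-3/2)"])
    have "summable (\<lambda>n. real n powr (-3/2))" by (simp add: summable_real_powr_iff)
    then have "summable (\<lambda>n. real (Suc n) powr (-3/2))" by (subst summable_Suc_iff)
    then show "summable (\<lambda>n. 2 * real (Suc n) powr (-3/2))" by (rule summable_mult)
    show "\<exists>N. \<forall>n\<ge>N. norm (harm (n + 1) / real (n + 1) ^ s) \<le> 2 * real (Suc n) powr (-3/2)"
    proof (intro exI allI impI)
      fix n :: nat
      define x where "x = real (Suc n)"
      have x1: "x \<ge> 1" by (simp add: x_def)
      have "harm (n + 1) / x ^ s \<le> harm (n + 1) / x\<^sup>2"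
        using x1 s2 by (intro divide_left_mono) (auto simp: harm_nonneg power_increasing)
      also have "\<dots> \<le> 2 * sqrt x / x\<^sup>2"
        using harm_le_two_sqrt[of "n + 1"] x1 by (intro divide_right_mono) (auto simp: x_def)
      also have "\<dots> = 2 * x powr (-3/2)"
        using x1 powr_diff[of x "1/2" 2] by (simp add: powr_half_sqrt powr_numeral)
      finally show "norm (harm (n + 1) / real (n + 1) ^ s) \<le> 2 * real (Suc n) powr (-3/2)"
        by (simp add: x_def harm_nonneg)
    qed
  qed
  then show ?thesis unfolding zetaH_def by (rule summable_sums)
qed

lemma hurwitz_zeta_int_has_sum_tail:
  assumes "s \<ge> 2"
  shows "((\<lambda>k. 1 / real (k + 1) ^ s) has_sum hurwitz_zeta_int s (real (n + 1))) {n..}"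
proof -
  have "summable (\<lambda>j. 1 / real (j + n + 1) ^ s)"
    using summable_ignore_initial_segment[OF sums_summable[OF zeta_int_sums[OF assms]], of n]
    by simp
  then have "(\<lambda>j. 1 / real (j + n + 1) ^ s) sums hurwitz_zeta_int s (real (n + 1))"
    unfolding hurwitz_zeta_int_def by (simp add: summable_sums ac_simps)
  then have "((\<lambda>j. 1 / real (j + n + 1) ^ s) has_sum hurwitz_zeta_int s (real (n + 1))) UNIV"
    by (rule sums_nonneg_imp_has_sum) simp
  moreover have "bij_betw (\<lambda>j. j + n) UNIV {n..}"
    by (rule bij_betwI[of _ _ _ "\<lambda>k. k - n"]) auto
  ultimately show ?thesis
    using has_sum_reindex_bij_betw[of "\<lambda>j. j + n" UNIV "{n..}" "\<lambda>k. 1 / real (k + 1) ^ s"]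
    by simp
qed

lemma hyperharm_3_zeta_series:
  fixes m :: nat
  assumes "m \<ge> 4"
  shows "(\<lambda>n. hyperharm 3 (n + 1) / real (n + 1) ^ m) sums
           (1/2 * zetaH (m - 2) + 3/2 * zetaH (m - 1) + zetaH m
            - 5/4 * zeta_int (m - 1) - 3/4 * zeta_int (m - 2))"
proof -
  define k where "k = m - 2"
  have mk: "m = k + 2" and k2: "k \<ge> 2" using assms by (auto simp: k_def)
  have split: "hyperharm 3 (n + 1) / real (n + 1) ^ m =
     1/2 * (harm (n + 1) / real (n + 1) ^ k) + 3/2 * (harm (n + 1) / real (n + 1) ^ (k + 1))
     + harm (n + 1) / real (n + 1) ^ m
     - 5/4 * (1 / real (n + 1) ^ (k + 1)) - 3/4 * (1 / real (n + 1) ^ k)" for n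
  proof -
    define x where "x = real (n + 1)"
    have "x > 0" by (simp add: x_def)
    then have "((x + 1) * (x + 2) / 2 * harm (n + 1) - 3/4 * x\<^sup>2 - 5/4 * x) / x ^ (k + 2) =
       1/2 * (harm (n + 1) / x ^ k) + 3/2 * (harm (n + 1) / x ^ (k + 1))
       + harm (n + 1) / x ^ (k + 2) - 5/4 * (1 / x ^ (k + 1)) - 3/4 * (1 / x ^ k)"
      by (simp add: field_simps power_add power2_eq_square)
    then show ?thesis by (simp add: hyperharm_3 x_def mk)
  qed
  have "m - 2 = k" "m - 1 = k + 1" using mk by auto
  moreover have "(\<lambda>n. 1/2 * (harm (n + 1) / real (n + 1) ^ k)
     + 3/2 * (harm (n + 1) / real (n + 1) ^ (k + 1)) + harm (n + 1) / real (n + 1) ^ m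
     - 5/4 * (1 / real (n + 1) ^ (k + 1)) - 3/4 * (1 / real (n + 1) ^ k))
     sums (1/2 * zetaH k + 3/2 * zetaH (k + 1) + zetaH m
           - 5/4 * zeta_int (k + 1) - 3/4 * zeta_int k)"
    using k2 mk by (intro sums_diff sums_add sums_mult zetaH_sums zeta_int_sums) auto
  ultimately show ?thesis by (simp only: split)
qed

(* sum_k h_k^(r+1)/k^m = sum_n h_n^(r) zeta(m,n), for every order r:
   both are the sum of h_n^(r)/k^m over the pairs n <= k. *)
lemma hyperharm_series_eq_hurwitz_series:
  fixes m r :: nat and L :: real
  assumes m2: "m \<ge> 2"
    and first: "(\<lambda>k. hyperharm (Suc r) (k + 1) / real (k + 1) ^ m) sums L"
  shows "(\<lambda>n. hyperharm r (n + 1) * hurwitz_zeta_int m (real (n + 1))) sums L"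
proof -
  define F :: "nat \<times> nat \<Rightarrow> real"
    where "F = (\<lambda>(k, n). hyperharm r (n + 1) / real (k + 1) ^ m)"
  have rows: "((\<lambda>n. F (k, n)) has_sum (hyperharm (Suc r) (k + 1) / real (k + 1) ^ m)) {..k}" for k
  proof -
    have "hyperharm (Suc r) (k + 1) = (\<Sum>n=0..k. hyperharm r (Suc n))"
      using sum.shift_bounds_cl_Suc_ivl[of "hyperharm r" 0 k] by simp
    then have "hyperharm (Suc r) (k + 1) / real (k + 1) ^ m = (\<Sum>n\<le>k. F (k, n))"
      by (simp add: F_def sum_divide_distrib atLeast0AtMost)
    then show ?thesis using has_sum_finite[of "{..k}" "\<lambda>n. F (k, n)"] by simp
  qed
  have total: "((\<lambda>k. hyperharm (Suc r) (k + 1) / real (k + 1) ^ m) has_sum L) UNIV"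
    using first by (rule sums_nonneg_imp_has_sum) (simp del: hyperharm.simps add: hyperharm_nonneg)
  have "F x \<ge> 0" for x by (auto simp: F_def hyperharm_nonneg split: prod.splits)
  then have "F summable_on Sigma UNIV (\<lambda>k. {..k})"
    using rows total by (intro summable_on_SigmaI) (auto dest: has_sum_imp_summable)
  then have by_rows: "(F has_sum L) (Sigma UNIV (\<lambda>k. {..k}))"
    using rows total by (intro has_sum_SigmaI) auto
  have swap: "bij_betw prod.swap (Sigma UNIV (\<lambda>n. {n..})) (Sigma UNIV (\<lambda>k. {..k}))"
    by (rule bij_betwI[of _ _ _ prod.swap]) auto
  have "((\<lambda>x. F (prod.swap x)) has_sum L) (Sigma UNIV (\<lambda>n. {n..}))"
    using has_sum_reindex_bij_betw[OF swap, of F L] by_rows by simp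
  moreover have "((\<lambda>k. F (prod.swap (n, k))) has_sum
                   (hyperharm r (n + 1) * hurwitz_zeta_int m (real (n + 1)))) {n..}" for n
    using has_sum_cmult_right[OF hurwitz_zeta_int_has_sum_tail[OF m2], of "hyperharm r (n + 1)"]
    by (simp add: F_def)
  ultimately have "((\<lambda>n. hyperharm r (n + 1) * hurwitz_zeta_int m (real (n + 1))) has_sum L) UNIV"
    by (rule has_sum_Sigma')
  then show ?thesis by (rule has_sum_imp_sums)
qed

theorem mainTheorem4:
  fixes m :: nat
  assumes "m \<ge> 4"
  shows "(\<lambda>n. hyperharm 3 (n + 1) / real (n + 1) ^ m) sums
           (1/2 * zetaH (m - 2) + 3/2 * zetaH (m - 1) + zetaH m
            - 5/4 * zeta_int (m - 1) - 3/4 * zeta_int (m - 2))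
       \<and> (\<lambda>n. hyperharm 2 (n + 1) * hurwitz_zeta_int m (real (n + 1))) sums
           (1/2 * zetaH (m - 2) + 3/2 * zetaH (m - 1) + zetaH m
            - 5/4 * zeta_int (m - 1) - 3/4 * zeta_int (m - 2))"
proof
  show first: "(\<lambda>n. hyperharm 3 (n + 1) / real (n + 1) ^ m) sums
           (1/2 * zetaH (m - 2) + 3/2 * zetaH (m - 1) + zetaH m
            - 5/4 * zeta_int (m - 1) - 3/4 * zeta_int (m - 2))"
    using assms by (rule hyperharm_3_zeta_series)
  have "m \<ge> 2" using assms by simp
  from hyperharm_series_eq_hurwitz_series[OF this first[unfolded numeral_3_eq_3]]
  show "(\<lambda>n. hyperharm 2 (n + 1) * hurwitz_zeta_int m (real (n + 1))) sums
           (1/2 * zetaH (m - 2) + 3/2 * zetaH (m - 1) + zetaH m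
            - 5/4 * zeta_int (m - 1) - 3/4 * zeta_int (m - 2))"
    unfolding numeral_2_eq_2 .
qed

end
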